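(* Let $\prec$ be the lexicographic term order on $K[\mathbf T_{\lambda-\mu}]$ induced by the variable order $T_{rc}>T_{r'c'}$ if and only if $r<r'$, or $r=r'$ and $c<c'$. Then: (a) the 2-minors of $\mathbf T_{\lambda-\mu}$ form a Gröbner basis of $I_2(\mathbf T_{\lambda-\mu})$ with respect to $\prec$; (b) the 2-minors of $\mathbf S_{\lambda-\mu}$ form a Gröbner basis of $I_2(\mathbf S_{\lambda-\mu})$ with respect to $\prec$.
   Context: Let $K$ be a field. Fix an integer $n\ge1$, a partition $\lambda=(\lambda_1,\dots,\lambda_n)$ of positive integers with $m:=\lambda_1\ge\lambda_2\ge\cdots\ge\lambda_n$, and an integer vector $\mu=(\mu_1,\dots,\mu_n)$ with $0\le\mu_1\le\cdots\le\mu_n<\lambda_n$ and $\mu_i\ge i-1$ for all $i$. The tableau $\mathbf T_{\lambda-\mu}$ is the set of positions $\{(i,j):1\le i\le n,\ \mu_i<j\le\lambda_i\}$ in an $m\times m$ array, and $K[\mathbf T_{\lambda-\mu}]$ is the polynomial ring over $K$ in the variables $T_{ij}$, $(i,j)\in\mathbf T_{\lambda-\mu}$; the entry of $\mathbf T_{\lambda-\mu}$ at $(i,j)$ is $T_{ij}$. The symmetrized tableau $\mathbf S_{\lambda-\mu}$ is the partially filled $m\times m$ array with set of positions $\{(i,j):(i,j)\in\mathbf T_{\lambda-\mu}\text{ or }(j,i)\in\mathbf T_{\lambda-\mu}\}$, whose entry at $(i,j)$ is $T_{ij}$ if $(i,j)\in\mathbf T_{\lambda-\mu}$ and $T_{ji}$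 otherwise (this is well defined; $\mathbf S_{\lambda-\mu}$ may have holes). For such an array $A$ with set of positions $P$ and entries $a_{ij}$, a 2-minor of $A$ is a polynomial $a_{ij}a_{kl}-a_{il}a_{kj}$ with $i<k$, $j<l$ and $(i,j),(i,l),(k,j),(k,l)\in P$. $I_2(\mathbf T_{\lambda-\mu})$ and $I_2(\mathbf S_{\lambda-\mu})$ denote the ideals of $K[\mathbf T_{\lambda-\mu}]$ generated by the 2-minors of $\mathbf T_{\lambda-\mu}$ and of $\mathbf S_{\lambda-\mu}$, respectively. *)

theory Defs
  imports "HOL-Library.Poly_Mapping"
begin

type_synonym mon = "(nat \<times> nat) \<Rightarrow>\<^sub>0 nat"
type_synonym 'a mpoly = "mon \<Rightarrow>\<^sub>0 'a"

definition Var :: "nat \<times> nat \<Rightarrow> 'a::comm_ring_1 mpoly" where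
  "Var v = Poly_Mapping.single (Poly_Mapping.single v 1) 1"

definition poly_ring :: "(nat \<times> nat) set \<Rightarrow> 'a::comm_ring_1 mpoly set" where
  "poly_ring P = {f. \<forall>m \<in> Poly_Mapping.keys f. \<forall>v. Poly_Mapping.lookup m v \<noteq> 0 \<longrightarrow> v \<in> P}"

definition ideal_in :: "'a::comm_ring_1 mpoly set \<Rightarrow> 'a mpoly set \<Rightarrow> 'a mpoly set" where
  "ideal_in R G = {(\<Sum>g\<in>F. q g * g) | F q. finite F \<and> F \<subseteq> G \<and> (\<forall>g\<in>F. q g \<in> R)}"

definition var_gt :: "nat \<times> nat \<Rightarrow> nat \<times> nat \<Rightarrow> bool" where
  "var_gt v w \<longleftrightarrow> fst v < fst w \<or> (fst v = fst w \<and> snd v < snd w)"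

definition lex_less :: "mon \<Rightarrow> mon \<Rightarrow> bool" where
  "lex_less m m' \<longleftrightarrow> (\<exists>v. Poly_Mapping.lookup m v < Poly_Mapping.lookup m' v \<and>
       (\<forall>w. var_gt w v \<longrightarrow> Poly_Mapping.lookup m w = Poly_Mapping.lookup m' w))"

definition lead_mon :: "'a::zero mpoly \<Rightarrow> mon" where
  "lead_mon f = (THE m. m \<in> Poly_Mapping.keys f \<and> (\<forall>m' \<in> Poly_Mapping.keys f. m' \<noteq> m \<longrightarrow> lex_less m' m))"

definition mon_dvd :: "mon \<Rightarrow> mon \<Rightarrow> bool" where
  "mon_dvd m m' \<longleftrightarrow> (\<forall>v. Poly_Mapping.lookup m v \<le> Poly_Mapping.lookup m' v)"

definition is_groebner_basis :: "'a::zero mpoly set \<Rightarrow> 'a mpoly set \<Rightarrow> bool" where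
  "is_groebner_basis G I \<longleftrightarrow> G \<subseteq> I \<and>
     (\<forall>f \<in> I. f \<noteq> 0 \<longrightarrow> (\<exists>g \<in> G. g \<noteq> 0 \<and> mon_dvd (lead_mon g) (lead_mon f)))"

definition minors2 :: "(nat \<times> nat) set \<Rightarrow> (nat \<times> nat \<Rightarrow> 'a::comm_ring_1 mpoly) \<Rightarrow> 'a mpoly set" where
  "minors2 P a = {a (i,j) * a (k,l) - a (i,l) * a (k,j) | i j k l.
      i < k \<and> j < l \<and> (i,j) \<in> P \<and> (i,l) \<in> P \<and> (k,j) \<in> P \<and> (k,l) \<in> P}"

text \<open>Tableau T_{\<lambda>-\<mu>} (rows 1..n) and its symmetrization S_{\<lambda>-\<mu>}.\<close>
definition tab_pos :: "nat \<Rightarrow> (nat \<Rightarrow> nat) \<Rightarrow> (nat \<Rightarrow> nat) \<Rightarrow> (nat \<times> nat) set" where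
  "tab_pos n lam mu = {(i,j). 1 \<le> i \<and> i \<le> n \<and> mu i < j \<and> j \<le> lam i}"

definition tab_entry :: "(nat \<times> nat) \<Rightarrow> 'a::comm_ring_1 mpoly" where
  "tab_entry p = Var p"

definition sym_pos :: "nat \<Rightarrow> (nat \<Rightarrow> nat) \<Rightarrow> (nat \<Rightarrow> nat) \<Rightarrow> (nat \<times> nat) set" where
  "sym_pos n lam mu = {(i,j). (i,j) \<in> tab_pos n lam mu \<or> (j,i) \<in> tab_pos n lam mu}"

definition sym_entry :: "nat \<Rightarrow> (nat \<Rightarrow> nat) \<Rightarrow> (nat \<Rightarrow> nat) \<Rightarrow> (nat \<times> nat) \<Rightarrow> 'a::comm_ring_1 mpoly" where
  "sym_entry n lam mu p = (if p \<in> tab_pos n lam mu then Var p else Var (snd p, fst p))"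

end

theory Submission
  imports Defs "HOL-Library.Product_Lexorder"
begin

text \<open>Every 2-minor is a binomial \<open>T(i,j) T(k,l) - T(i,l) T(k,j)\<close> whose two monomials have the
  same degree for a grading \<open>\<phi>\<close> compatible with multiplication: row and column contents
  for the tableau, and the number of occurrences of each index (as row or column) for the
  symmetrized tableau. Reducing a monomial by such binomials preserves \<open>\<phi>\<close>; so if \<open>\<phi>\<close> is
  injective on standard monomials, the leading monomial of an ideal element cannot be
  standard, because the coefficient sum over its \<open>\<phi>\<close>-fibre, which vanishes on the ideal,
  would be its own coefficient.

  For the tableau, a standard monomial has no two factors in south-east position spanning a
  minor, and it is recovered from its row and column contents by repeatedly removing the
  factor in its lowest row and leftmost admissible column. For the symmetrized tableau,
  standardness moreover forces every row index used to be at most every column index used,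
  and then the row contents are determined by the index contents.\<close>

abbreviation lookup :: "('b \<Rightarrow>\<^sub>0 'c::zero) \<Rightarrow> 'b \<Rightarrow> 'c" where "lookup \<equiv> Poly_Mapping.lookup"
abbreviation keys :: "('b \<Rightarrow>\<^sub>0 'c::zero) \<Rightarrow> 'b set" where "keys \<equiv> Poly_Mapping.keys"
abbreviation single :: "'b \<Rightarrow> 'c::zero \<Rightarrow> 'b \<Rightarrow>\<^sub>0 'c" where "single \<equiv> Poly_Mapping.single"

abbreviation var_mon :: "nat \<times> nat \<Rightarrow> mon" where "var_mon v \<equiv> single v 1"

definition mon_binomial :: "mon \<Rightarrow> mon \<Rightarrow> 'a::comm_ring_1 mpoly" where
  "mon_binomial a b = single a 1 - single b 1"

section \<open>Lexicographic order and leading monomials\<close>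

lemma var_gt_iff_less: "var_gt v w \<longleftrightarrow> v < w"
  by (cases v; cases w) (auto simp: var_gt_def)

lemma lex_less_irrefl: "\<not> lex_less m m"
  by (auto simp: lex_less_def)

lemma lex_less_trans:
  assumes "lex_less a b" "lex_less b c" shows "lex_less a c"
proof -
  obtain v where v: "lookup a v < lookup b v" "\<forall>w. var_gt w v \<longrightarrow> lookup a w = lookup b w"
    using assms(1) by (auto simp: lex_less_def)
  obtain u where u: "lookup b u < lookup c u" "\<forall>w. var_gt w u \<longrightarrow> lookup b w = lookup c w"
    using assms(2) by (auto simp: lex_less_def)
  consider "v = u" | "v < u" | "u < v" by fastforce
  then show ?thesis
  proof cases
    case 1 then show ?thesis using u v unfolding lex_less_def by (intro exI[of _ v]) auto
  next
    case 2
    then have "lookup b v = lookup c v" using u(2) var_gt_iff_less by blast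
    then have "lookup a v < lookup c v" using v by simp
    moreover have "\<forall>w. var_gt w v \<longrightarrow> lookup a w = lookup c w"
      using u v 2 by (auto simp: var_gt_iff_less)
    ultimately show ?thesis unfolding lex_less_def by blast
  next
    case 3
    then have "lookup a u = lookup b u" using v(2) var_gt_iff_less by blast
    then have "lookup a u < lookup c u" using u by simp
    moreover have "\<forall>w. var_gt w u \<longrightarrow> lookup a w = lookup c w"
      using u v 3 by (auto simp: var_gt_iff_less)
    ultimately show ?thesis unfolding lex_less_def by blast
  qed
qed

lemma lex_less_linear:
  assumes "m \<noteq> m'" shows "lex_less m m' \<or> lex_less m' m"
proof -
  let ?D = "{v. lookup m v \<noteq> lookup m' v}"
  have fin: "finite ?D"
    by (rule finite_subset[of _ "keys m \<union> keys m'"]) (auto simp: in_keys_iff)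
  have ne: "?D \<noteq> {}" using assms by (metis (mono_tags, lifting) empty_Collect_eq poly_mapping_eqI)
  define v where "v = Min ?D"
  have v: "lookup m v \<noteq> lookup m' v" unfolding v_def using Min_in[OF fin ne] by blast
  have above: "\<forall>w. var_gt w v \<longrightarrow> lookup m w = lookup m' w"
    using fin Min_le by (fastforce simp: var_gt_iff_less v_def)
  show ?thesis
  proof (cases "lookup m v < lookup m' v")
    case True
    then show ?thesis using above unfolding lex_less_def by blast
  next
    case False
    then have "lookup m' v < lookup m v" using v by simp
    then show ?thesis using above unfolding lex_less_def by metis
  qed
qed

lemma lex_less_add_left: "lex_less a b \<Longrightarrow> lex_less (u + a) (u + b)"
  by (auto simp: lex_less_def lookup_add)

lemma wf_lex_less_on:
  assumes "finite P"
  shows "wf {(s,m). keys s \<subseteq> P \<and> keys m \<subseteq> P \<and> lex_less s m}"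
proof -
  define xs where "xs = sorted_list_of_set P"
  have sorted: "sorted_wrt (<) xs" unfolding xs_def by (rule strict_sorted_list_of_set)
  have set_xs: "set xs = P" unfolding xs_def using assms by simp
  define key where "key m = map (lookup m) xs" for m :: mon
  have "{(s,m). keys s \<subseteq> P \<and> keys m \<subseteq> P \<and> lex_less s m} \<subseteq> inv_image (lex less_than) key"
  proof clarsimp
    fix s m assume mP: "keys m \<subseteq> P" and "lex_less s m"
    then obtain v where v: "lookup s v < lookup m v" "\<forall>w. var_gt w v \<longrightarrow> lookup s w = lookup m w"
      by (auto simp: lex_less_def)
    then have "v \<in> set xs" using mP set_xs by (auto simp: in_keys_iff)
    then obtain as bs where xs: "xs = as @ v # bs" by (meson split_list)
    then have "\<forall>w\<in>set as. w < v" using sorted by (simp add: sorted_wrt_append)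
    then have "map (lookup s) as = map (lookup m) as" using v(2) by (auto simp: var_gt_iff_less)
    then show "(key s, key m) \<in> lex less_than"
      unfolding key_def lex_conv using v(1) xs
      by (intro CollectI case_prodI conjI exI[of _ "map (lookup s) as"] exI[of _ "lookup s v"]
          exI[of _ "lookup m v"] exI[of _ "map (lookup s) bs"] exI[of _ "map (lookup m) bs"]) auto
  qed
  then show ?thesis by (rule wf_subset[OF wf_inv_image[OF wf_lex[OF wf_less_than]]])
qed

lemma lead_mon_eqI:
  assumes "c \<in> keys f" "\<And>m. m \<in> keys f \<Longrightarrow> m \<noteq> c \<Longrightarrow> lex_less m c"
  shows "lead_mon f = c"
  unfolding lead_mon_def
proof (rule the_equality)
  fix m assume m: "m \<in> keys f \<and> (\<forall>m'\<in>keys f. m' \<noteq> m \<longrightarrow> lex_less m' m)"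
  show "m = c"
  proof (rule ccontr)
    assume "m \<noteq> c"
    then have "lex_less m c" "lex_less c m" using m assms by auto
    then show False using lex_less_trans lex_less_irrefl by blast
  qed
qed (use assms in blast)

lemma ex_lex_greatest:
  assumes "finite S" "S \<noteq> {}"
  shows "\<exists>c\<in>S. \<forall>m\<in>S. m \<noteq> c \<longrightarrow> lex_less m c"
  using assms
proof (induction S rule: finite_ne_induct)
  case (insert x F)
  then obtain c where c: "c \<in> F" "\<forall>m\<in>F. m \<noteq> c \<longrightarrow> lex_less m c" by blast
  show ?case
  proof (cases "lex_less c x")
    case True
    then show ?thesis using c lex_less_trans by (intro bexI[of _ x]) auto
  next
    case False
    then have "x = c \<or> lex_less x c" using lex_less_linear by blast
    then show ?thesis using c by (intro bexI[of _ c]) auto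
  qed
qed simp

lemma
  assumes "f \<noteq> 0"
  shows lead_mon_in_keys: "lead_mon f \<in> keys f"
    and lex_less_lead_mon: "m \<in> keys f \<Longrightarrow> m \<noteq> lead_mon f \<Longrightarrow> lex_less m (lead_mon f)"
proof -
  obtain c where c: "c \<in> keys f" "\<forall>m\<in>keys f. m \<noteq> c \<longrightarrow> lex_less m c"
    using ex_lex_greatest[of "keys f"] assms by auto
  then have "lead_mon f = c" by (intro lead_mon_eqI) auto
  then show "lead_mon f \<in> keys f" "m \<in> keys f \<Longrightarrow> m \<noteq> lead_mon f \<Longrightarrow> lex_less m (lead_mon f)"
    using c by auto
qed

lemma keys_mon_binomial: "a \<noteq> b \<Longrightarrow> keys (mon_binomial a b) = {a, b}"
  by (auto simp: mon_binomial_def in_keys_iff lookup_minus lookup_single when_def split: if_splits)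

lemma
  assumes "lex_less b a"
  shows mon_binomial_nonzero: "mon_binomial a b \<noteq> 0"
    and lead_mon_mon_binomial: "lead_mon (mon_binomial a b) = a"
    and lead_mon_mon_binomial_swap: "lead_mon (mon_binomial b a) = a"
proof -
  have "a \<noteq> b" using assms lex_less_irrefl by blast
  then have keys: "keys (mon_binomial a b) = {a, b}" "keys (mon_binomial b a) = {a, b}"
    by (simp_all add: keys_mon_binomial insert_commute)
  then show "mon_binomial a b \<noteq> 0" by (metis insert_not_empty keys_eq_empty)
  show "lead_mon (mon_binomial a b) = a"
    by (rule lead_mon_eqI) (use keys assms in auto)
  show "lead_mon (mon_binomial b a) = a"
    by (rule lead_mon_eqI) (use keys assms in auto)
qed

section \<open>Binomials homogeneous for a grading\<close>

definition standard :: "'a::zero mpoly set \<Rightarrow> mon \<Rightarrow> bool" where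
  "standard G s \<longleftrightarrow> (\<forall>g\<in>G. g \<noteq> 0 \<longrightarrow> \<not> mon_dvd (lead_mon g) s)"

definition fiber_coeff :: "(mon \<Rightarrow> 'b) \<Rightarrow> 'a::comm_ring_1 mpoly \<Rightarrow> 'b \<Rightarrow> 'a" where
  "fiber_coeff \<phi> f t = (\<Sum>m\<in>keys f. if \<phi> m = t then lookup f m else 0)"

lemma fiber_coeff_superset:
  assumes "finite S" "keys f \<subseteq> S"
  shows "fiber_coeff \<phi> f t = (\<Sum>m\<in>S. if \<phi> m = t then lookup f m else 0)"
  unfolding fiber_coeff_def
  by (rule sum.mono_neutral_left) (use assms in \<open>auto simp: in_keys_iff\<close>)

lemma fiber_coeff_add: "fiber_coeff \<phi> (f + g) t = fiber_coeff \<phi> f t + fiber_coeff \<phi> g t"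
proof -
  let ?S = "keys f \<union> keys g"
  have "fiber_coeff \<phi> (f + g) t = (\<Sum>m\<in>?S. if \<phi> m = t then lookup (f + g) m else 0)"
    by (rule fiber_coeff_superset) (auto dest: subsetD[OF keys_add])
  also have "\<dots> = (\<Sum>m\<in>?S. if \<phi> m = t then lookup f m else 0)
                  + (\<Sum>m\<in>?S. if \<phi> m = t then lookup g m else 0)"
    by (simp add: lookup_add sum.distrib[symmetric] if_distrib) (rule sum.cong, auto simp: lookup_add)
  also have "\<dots> = fiber_coeff \<phi> f t + fiber_coeff \<phi> g t"
    by (simp add: fiber_coeff_superset[symmetric])
  finally show ?thesis .
qed

lemma fiber_coeff_uminus: "fiber_coeff \<phi> (- f) t = - fiber_coeff \<phi> f t"
  by (simp add: fiber_coeff_def sum_negf[symmetric] if_distrib) (rule sum.cong, auto)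

lemma fiber_coeff_diff: "fiber_coeff \<phi> (f - g) t = fiber_coeff \<phi> f t - fiber_coeff \<phi> g t"
  using fiber_coeff_add[of \<phi> f "- g" t] fiber_coeff_uminus[of \<phi> g t] by simp

lemma fiber_coeff_zero: "fiber_coeff \<phi> 0 t = 0"
  by (simp add: fiber_coeff_def)

lemma fiber_coeff_sum: "fiber_coeff \<phi> (\<Sum>x\<in>A. F x) t = (\<Sum>x\<in>A. fiber_coeff \<phi> (F x) t)"
  by (induction A rule: infinite_finite_induct) (auto simp: fiber_coeff_zero fiber_coeff_add)

lemma fiber_coeff_single: "fiber_coeff \<phi> (single m c) t = (if \<phi> m = t then c else 0)"
  by (simp add: fiber_coeff_def)

lemma mpoly_sum_single: "f = (\<Sum>m\<in>keys f. single m (lookup f m))"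
  by (rule poly_mapping_eqI) (simp add: lookup_sum lookup_single when_def in_keys_iff)

lemma fiber_coeff_mult_mon_binomial:
  assumes "\<And>u. \<phi> (u + a) = \<phi> (u + b)"
  shows "fiber_coeff \<phi> (q * mon_binomial a b) t = 0"
proof -
  have "q * mon_binomial a b = (\<Sum>u\<in>keys q. single u (lookup q u) * mon_binomial a b)"
    by (subst mpoly_sum_single[of q]) (simp add: sum_distrib_right)
  also have "\<dots> = (\<Sum>u\<in>keys q. single (u + a) (lookup q u) - single (u + b) (lookup q u))"
    by (simp add: mon_binomial_def right_diff_distrib mult_single)
  finally show ?thesis
    by (simp add: fiber_coeff_sum fiber_coeff_diff fiber_coeff_single assms)
qed

lemma poly_ring_iff: "f \<in> poly_ring P \<longleftrightarrow> (\<forall>m\<in>keys f. keys m \<subseteq> P)"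
  by (simp add: poly_ring_def subset_iff in_keys_iff)

lemma poly_ring_mult: "p \<in> poly_ring P \<Longrightarrow> q \<in> poly_ring P \<Longrightarrow> p * q \<in> poly_ring P"
  unfolding poly_ring_iff by (fastforce dest!: subsetD[OF keys_mult] dest: subsetD[OF keys_add])

lemma poly_ring_sum: "(\<And>x. x \<in> A \<Longrightarrow> F x \<in> poly_ring P) \<Longrightarrow> (\<Sum>x\<in>A. F x) \<in> poly_ring P"
  unfolding poly_ring_iff by (fastforce dest!: subsetD[OF keys_sum])

lemma mon_binomial_in_poly_ring:
  "keys a \<subseteq> P \<Longrightarrow> keys b \<subseteq> P \<Longrightarrow> mon_binomial a b \<in> poly_ring P"
  using keys_diff[of "single a 1" "single b 1"] by (fastforce simp: poly_ring_iff mon_binomial_def)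

lemma generators_in_ideal_in: "1 \<in> R \<Longrightarrow> G \<subseteq> ideal_in R G"
  unfolding ideal_in_def by (force intro!: exI[of _ "\<lambda>_. 1"])

lemma mon_dvd_imp_eq_diff_add:
  assumes "mon_dvd a m" shows "m = (m - a) + a"
proof (rule poly_mapping_eqI)
  fix k
  have "lookup a k \<le> lookup m k" using assms unfolding mon_dvd_def by blast
  then show "lookup m k = lookup (m - a + a) k" by (simp add: lookup_add lookup_minus)
qed

lemma keys_mon_diff: "keys (m - a) \<subseteq> keys (m::mon)"
  by (auto simp: in_keys_iff lookup_minus)

locale graded_binomials =
  fixes P :: "(nat \<times> nat) set" and G :: "'a::field mpoly set" and \<phi> :: "mon \<Rightarrow> 'b"
  assumes finite_vars: "finite P"
    and binomial_gens: "\<And>g. g \<in> G \<Longrightarrow> \<exists>a b. lex_less b a \<and> \<phi> a = \<phi> b \<and> keys a \<subseteq> P \<and> keys b \<subseteq> P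
                                        \<and> (g = mon_binomial a b \<or> g = mon_binomial b a)"
    and grading_add: "\<And>u a b. \<phi> a = \<phi> b \<Longrightarrow> \<phi> (u + a) = \<phi> (u + b)"
begin

lemma ex_standard_same_degree:
  assumes "keys m \<subseteq> P"
  shows "\<exists>s. keys s \<subseteq> P \<and> standard G s \<and> \<phi> s = \<phi> m \<and> (s = m \<or> lex_less s m)"
  using assms
proof (induction m rule: wf_induct[OF wf_lex_less_on[OF finite_vars]])
  case (1 m)
  show ?case
  proof (cases "standard G m")
    case False
    then obtain g where g: "g \<in> G" "g \<noteq> 0" "mon_dvd (lead_mon g) m" by (auto simp: standard_def)
    obtain a b where ab: "lex_less b a" "\<phi> a = \<phi> b" "keys a \<subseteq> P" "keys b \<subseteq> P"
      "g = mon_binomial a b \<or> g = mon_binomial b a"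
      using binomial_gens[OF g(1)] by blast
    have "lead_mon g = a" using ab(1,5) lead_mon_mon_binomial lead_mon_mon_binomial_swap by metis
    then have m: "m = (m - a) + a" using g(3) mon_dvd_imp_eq_diff_add by simp
    define m' where "m' = (m - a) + b"
    have m'P: "keys m' \<subseteq> P"
      unfolding m'_def using keys_add[of "m - a" b] keys_mon_diff[of m a] 1(2) ab(4) by blast
    have less: "lex_less m' m" unfolding m'_def by (subst m, rule lex_less_add_left, rule ab(1))
    have deg: "\<phi> m' = \<phi> m" unfolding m'_def by (subst (2) m) (rule grading_add, simp add: ab(2))
    obtain s where "keys s \<subseteq> P" "standard G s" "\<phi> s = \<phi> m'" "s = m' \<or> lex_less s m'"
      using 1(1)[rule_format, of m'] m'P 1(2) less by blast
    then show ?thesis using less deg lex_less_trans by metis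
  qed (use 1(2) in blast)
qed

lemma fiber_coeff_ideal:
  assumes "f \<in> ideal_in (poly_ring P) G"
  shows "fiber_coeff \<phi> f t = 0" and "f \<in> poly_ring P"
proof -
  obtain F q where f: "f = (\<Sum>g\<in>F. q g * g)" "F \<subseteq> G" "\<forall>g\<in>F. q g \<in> poly_ring P"
    using assms unfolding ideal_in_def by blast
  have "fiber_coeff \<phi> (q g * g) t = 0" if g: "g \<in> F" for g
  proof -
    obtain a b where "\<phi> a = \<phi> b" "g = mon_binomial a b \<or> g = mon_binomial b a"
      using binomial_gens[of g] f(2) g by blast
    then show ?thesis
      using fiber_coeff_mult_mon_binomial grading_add by metis
  qed
  then show "fiber_coeff \<phi> f t = 0" unfolding f(1) fiber_coeff_sum by simp
  have "g \<in> poly_ring P" if "g \<in> G" for g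
    using binomial_gens[OF that] mon_binomial_in_poly_ring by metis
  then show "f \<in> poly_ring P"
    unfolding f(1) using f(2,3) by (intro poly_ring_sum poly_ring_mult) auto
qed

theorem groebner_basis_if_standard_inj:
  assumes inj: "\<And>s t. keys s \<subseteq> P \<Longrightarrow> keys t \<subseteq> P \<Longrightarrow> standard G s \<Longrightarrow> standard G t
                  \<Longrightarrow> \<phi> s = \<phi> t \<Longrightarrow> s = t"
  shows "is_groebner_basis G (ideal_in (poly_ring P) G)"
  unfolding is_groebner_basis_def
proof (intro conjI ballI impI)
  show "G \<subseteq> ideal_in (poly_ring P) G"
    by (rule generators_in_ideal_in) (simp add: poly_ring_iff)
next
  fix f assume f: "f \<in> ideal_in (poly_ring P) G" "f \<noteq> 0"
  define L where "L = lead_mon f"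
  have L: "L \<in> keys f" using lead_mon_in_keys[OF f(2)] by (simp add: L_def)
  have keys_f: "keys m \<subseteq> P" if "m \<in> keys f" for m
    using fiber_coeff_ideal(2)[OF f(1)] that by (simp add: poly_ring_iff)
  show "\<exists>g\<in>G. g \<noteq> 0 \<and> mon_dvd (lead_mon g) (lead_mon f)"
  proof (rule ccontr)
    assume "\<not> ?thesis"
    then have std_L: "standard G L" by (auto simp: standard_def L_def)
    have fiber: "\<phi> m = \<phi> L \<longleftrightarrow> m = L" if m: "m \<in> keys f" for m
    proof
      assume deg: "\<phi> m = \<phi> L"
      show "m = L"
      proof (rule ccontr)
        assume "m \<noteq> L"
        then have less: "lex_less m L" using lex_less_lead_mon[OF f(2) m] by (simp add: L_def)
        obtain s where "keys s \<subseteq> P" "standard G s" "\<phi> s = \<phi> m" "s = m \<or> lex_less s m"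
          using ex_standard_same_degree keys_f[OF m] by blast
        moreover have "s = L" if "keys s \<subseteq> P" "standard G s" "\<phi> s = \<phi> m" for s
          using inj[OF that(1) keys_f[OF L] that(2) std_L] that(3) deg by simp
        ultimately show False using less lex_less_trans lex_less_irrefl by metis
      qed
    qed simp
    have "fiber_coeff \<phi> f (\<phi> L) = lookup f L"
      unfolding fiber_coeff_def using L by (simp add: fiber cong: if_cong)
    then show False using fiber_coeff_ideal(1)[OF f(1)] L by (simp add: in_keys_iff)
  qed
qed

end

definition row_deg :: "(nat \<times> nat) set \<Rightarrow> mon \<Rightarrow> nat \<Rightarrow> nat" where
  "row_deg P m i = (\<Sum>v\<in>P. if fst v = i then lookup m v else 0)"

definition col_deg :: "(nat \<times> nat) set \<Rightarrow> mon \<Rightarrow> nat \<Rightarrow> nat" where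
  "col_deg P m j = (\<Sum>v\<in>P. if snd v = j then lookup m v else 0)"

definition total_deg :: "(nat \<times> nat) set \<Rightarrow> mon \<Rightarrow> nat" where
  "total_deg P m = (\<Sum>v\<in>P. lookup m v)"

lemma row_deg_add: "row_deg P (u + a) i = row_deg P u i + row_deg P a i"
  by (simp add: row_deg_def lookup_add sum.distrib[symmetric] if_distrib)
     (rule sum.cong, auto simp: lookup_add)

lemma col_deg_add: "col_deg P (u + a) j = col_deg P u j + col_deg P a j"
  by (simp add: col_deg_def lookup_add sum.distrib[symmetric] if_distrib)
     (rule sum.cong, auto simp: lookup_add)

lemma total_deg_add: "total_deg P (u + a) = total_deg P u + total_deg P a"
  by (simp add: total_deg_def lookup_add sum.distrib)

lemma sum_lookup_var_mon:
  assumes "finite P" "v \<in> P"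
  shows "(\<Sum>w\<in>P. if R w then lookup (var_mon v) w else 0) = (if R v then 1 else 0)"
proof -
  have "(\<lambda>w. if R w then lookup (var_mon v) w else 0) = (\<lambda>w. if w = v then (if R v then 1 else 0) else 0)"
    by (auto simp: lookup_single when_def fun_eq_iff)
  then show ?thesis using assms by (simp only:) simp
qed

lemma
  assumes "finite P" "v \<in> P"
  shows row_deg_var_mon: "row_deg P (var_mon v) i = (if fst v = i then 1 else 0)"
    and col_deg_var_mon: "col_deg P (var_mon v) j = (if snd v = j then 1 else 0)"
    and total_deg_var_mon: "total_deg P (var_mon v) = 1"
proof -
  show "row_deg P (var_mon v) i = (if fst v = i then 1 else 0)"
    unfolding row_deg_def by (rule sum_lookup_var_mon[OF assms])
  show "col_deg P (var_mon v) j = (if snd v = j then 1 else 0)"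
    unfolding col_deg_def by (rule sum_lookup_var_mon[OF assms])
  show "total_deg P (var_mon v) = 1"
    unfolding total_deg_def using sum_lookup_var_mon[OF assms, of "\<lambda>_. True"] by simp
qed

lemma row_deg_pos_iff:
  "finite P \<Longrightarrow> 0 < row_deg P s i \<longleftrightarrow> (\<exists>j. (i,j) \<in> P \<and> 0 < lookup s (i,j))"
  unfolding row_deg_def neq0_conv[symmetric] by (subst sum_eq_0_iff) (force split: if_splits)+

lemma col_deg_pos_iff:
  "finite P \<Longrightarrow> 0 < col_deg P s j \<longleftrightarrow> (\<exists>i. (i,j) \<in> P \<and> 0 < lookup s (i,j))"
  unfolding col_deg_def neq0_conv[symmetric] by (subst sum_eq_0_iff) (force split: if_splits)+

lemma
  assumes "finite P" "(i,j) \<in> P"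
  shows lookup_le_row_deg: "lookup s (i,j) \<le> row_deg P s i"
    and lookup_le_col_deg: "lookup s (i,j) \<le> col_deg P s j"
  unfolding row_deg_def col_deg_def
  using member_le_sum[OF assms(2), of "\<lambda>v. if fst v = i then lookup s v else 0"]
    member_le_sum[OF assms(2), of "\<lambda>v. if snd v = j then lookup s v else 0"] assms(1)
  by auto

lemma eq_0_if_row_deg_eq_0:
  assumes "finite P" "keys s \<subseteq> P" "\<And>i. row_deg P s i = 0"
  shows "s = 0"
proof (rule poly_mapping_eqI)
  fix v
  show "lookup s v = lookup 0 v"
  proof (cases "v \<in> P")
    case True
    then show ?thesis using lookup_le_row_deg[OF assms(1), of "fst v" "snd v" s] assms(3) by simp
  qed (use assms(2) in \<open>auto simp: in_keys_iff\<close>)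
qed

lemma
  assumes "finite P" "\<And>i j. (i,j) \<in> P \<Longrightarrow> i < N \<and> j < N"
  shows sum_row_deg: "(\<Sum>y<N. row_deg P s y) = total_deg P s"
    and sum_col_deg: "(\<Sum>y<N. col_deg P s y) = total_deg P s"
proof -
  have "(\<Sum>y<N. row_deg P s y) = (\<Sum>v\<in>P. \<Sum>y<N. if fst v = y then lookup s v else 0)"
    unfolding row_deg_def by (rule sum.swap)
  also have "\<dots> = total_deg P s"
    unfolding total_deg_def by (rule sum.cong) (use assms(2) in auto)
  finally show "(\<Sum>y<N. row_deg P s y) = total_deg P s" .
  have "(\<Sum>y<N. col_deg P s y) = (\<Sum>v\<in>P. \<Sum>y<N. if snd v = y then lookup s v else 0)"
    unfolding col_deg_def by (rule sum.swap)
  also have "\<dots> = total_deg P s"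
    unfolding total_deg_def by (rule sum.cong) (use assms(2) in auto)
  finally show "(\<Sum>y<N. col_deg P s y) = total_deg P s" .
qed

section \<open>The tableau\<close>

lemma Var_mult_Var: "Var v * Var w = single (var_mon v + var_mon w) (1::'a::comm_ring_1)"
  by (simp add: Var_def mult_single)

lemma lex_less_antidiagonal:
  "i < k \<Longrightarrow> j < l \<Longrightarrow> lex_less (var_mon (i,l) + var_mon (k,j)) (var_mon (i,j) + var_mon (k,l))"
  unfolding lex_less_def
  by (rule exI[of _ "(i,j)"]) (auto simp: lookup_add lookup_single when_def var_gt_def)

lemma mon_dvd_var_mon: "0 < lookup s v \<Longrightarrow> mon_dvd (var_mon v) s"
  by (auto simp: mon_dvd_def lookup_single when_def)

lemma mon_dvd_var_mon_add:
  "v \<noteq> w \<Longrightarrow> 0 < lookup s v \<Longrightarrow> 0 < lookup s w \<Longrightarrow> mon_dvd (var_mon v + var_mon w) s"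
  by (auto simp: mon_dvd_def lookup_single lookup_add when_def)

lemma keys_var_mon_add: "keys (var_mon v + var_mon w) = {v, w}"
  by (auto simp: in_keys_iff lookup_add lookup_single when_def split: if_splits)

lemma
  assumes "finite P" "(i,j) \<in> P" "(i,l) \<in> P" "(k,j) \<in> P" "(k,l) \<in> P"
  shows row_deg_antidiagonal:
      "row_deg P (var_mon (i,j) + var_mon (k,l)) = row_deg P (var_mon (i,l) + var_mon (k,j))"
    and col_deg_antidiagonal:
      "col_deg P (var_mon (i,j) + var_mon (k,l)) = col_deg P (var_mon (i,l) + var_mon (k,j))"
  using assms by (simp_all only: fun_eq_iff row_deg_add col_deg_add row_deg_var_mon col_deg_var_mon)
    auto

locale ladder_tableau =
  fixes n :: nat and lam mu :: "nat \<Rightarrow> nat"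
  assumes lam_antimono: "\<And>i j. 1 \<le> i \<Longrightarrow> i \<le> j \<Longrightarrow> j \<le> n \<Longrightarrow> lam j \<le> lam i"
begin

abbreviation P :: "(nat \<times> nat) set" where "P \<equiv> tab_pos n lam mu"

lemma mem_tab_pos: "(i,j) \<in> P \<longleftrightarrow> 1 \<le> i \<and> i \<le> n \<and> mu i < j \<and> j \<le> lam i"
  by (simp add: tab_pos_def)

lemma finite_tab_pos: "finite P"
proof (rule finite_subset)
  show "P \<subseteq> {..n} \<times> {..lam 1}"
    using lam_antimono[of 1] by (force simp: tab_pos_def)
qed auto

lemma tab_pos_corners:
  assumes "(i,j) \<in> P" "(k,l) \<in> P" "i < k" "j < l" "mu k < j"
  shows "(i,l) \<in> P" "(k,j) \<in> P"
  using assms lam_antimono[of i k] by (auto simp: mem_tab_pos)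

lemma tab_minor_eq:
  "tab_entry (i,j) * tab_entry (k,l) - tab_entry (i,l) * tab_entry (k,j)
     = mon_binomial (var_mon (i,j) + var_mon (k,l)) (var_mon (i,l) + var_mon (k,j))"
  by (simp add: tab_entry_def Var_mult_Var mon_binomial_def)

text \<open>The condition \<open>mu k < j\<close> puts the other two corners \<open>(i,l)\<close> and \<open>(k,j)\<close> of the
  2-minor into the tableau.\<close>
definition diagonal_free :: "mon \<Rightarrow> bool" where
  "diagonal_free s \<longleftrightarrow> (\<forall>i j k l. i < k \<longrightarrow> j < l \<longrightarrow> (i,j) \<in> P \<longrightarrow> (k,l) \<in> P \<longrightarrow> mu k < j \<longrightarrow>
      lookup s (i,j) = 0 \<or> lookup s (k,l) = 0)"

lemma diagonal_free_if_standard: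
  assumes "minors2 P tab_entry \<subseteq> G" "standard G s"
  shows "diagonal_free s"
  unfolding diagonal_free_def
proof (intro allI impI)
  fix i j k l assume ijkl: "i < k" "j < l" "(i,j) \<in> P" "(k,l) \<in> P" "mu k < j"
  let ?g = "mon_binomial (var_mon (i,j) + var_mon (k,l)) (var_mon (i,l) + var_mon (k,j)) :: 'a mpoly"
  have "?g \<in> minors2 P tab_entry"
    using tab_pos_corners[OF ijkl(3,4,1,2,5)] ijkl(1-4) unfolding minors2_def tab_minor_eq by blast
  moreover note less = lex_less_antidiagonal[OF ijkl(1,2)]
  ultimately have "\<not> mon_dvd (lead_mon ?g) s"
    using assms mon_binomial_nonzero[OF less] unfolding standard_def by blast
  then have "\<not> mon_dvd (var_mon (i,j) + var_mon (k,l)) s"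
    unfolding lead_mon_mon_binomial[OF less] .
  moreover have "(i,j) \<noteq> (k,l)" using ijkl(1) by simp
  ultimately show "lookup s (i,j) = 0 \<or> lookup s (k,l) = 0"
    using mon_dvd_var_mon_add by blast
qed

lemma diagonal_free_mono:
  assumes "diagonal_free s" "\<And>v. lookup s' v \<le> lookup s v"
  shows "diagonal_free s'"
  using assms unfolding diagonal_free_def by (metis le_zero_eq)

text \<open>The lowest occupied row \<open>k\<close> of a diagonal-free monomial contains the leftmost
  occupied column \<open>c > mu k\<close>: otherwise the factors in column \<open>c\<close> and in row \<open>k\<close> would
  form a diagonal.\<close>
lemma diagonal_free_corner:
  assumes free: "diagonal_free u"
    and k: "0 < row_deg P u k" "\<And>i. 0 < row_deg P u i \<Longrightarrow> i \<le> k"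
    and c: "0 < col_deg P u c" "mu k < c" "\<And>j. mu k < j \<Longrightarrow> 0 < col_deg P u j \<Longrightarrow> c \<le> j"
  shows "0 < lookup u (k,c)"
proof -
  obtain l where l: "(k,l) \<in> P" "0 < lookup u (k,l)"
    using k(1) row_deg_pos_iff[OF finite_tab_pos] by blast
  have "0 < col_deg P u l" using l lookup_le_col_deg[OF finite_tab_pos] by (metis order.strict_trans2)
  then have "c \<le> l" using c(3) l(1) by (simp add: mem_tab_pos)
  obtain i where i: "(i,c) \<in> P" "0 < lookup u (i,c)"
    using c(1) col_deg_pos_iff[OF finite_tab_pos] by blast
  have "0 < row_deg P u i" using i lookup_le_row_deg[OF finite_tab_pos] by (metis order.strict_trans2)
  then have "i \<le> k" by (rule k(2))
  show ?thesis
  proof (cases "i = k \<or> c = l")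
    case True
    then show ?thesis using i l by auto
  next
    case False
    then have "i < k" "c < l" using \<open>i \<le> k\<close> \<open>c \<le> l\<close> by auto
    then show ?thesis
      using free i l c(2) unfolding diagonal_free_def by fastforce
  qed
qed

lemma ex_lowest_row_leftmost_col:
  assumes "0 < row_deg P s i\<^sub>0"
  obtains k c where "0 < row_deg P s k" "\<And>i. 0 < row_deg P s i \<Longrightarrow> i \<le> k"
    and "0 < col_deg P s c" "mu k < c" "\<And>j. mu k < j \<Longrightarrow> 0 < col_deg P s j \<Longrightarrow> c \<le> j"
proof -
  let ?R = "{i. 0 < row_deg P s i}"
  define k where "k = Max ?R"
  have "?R \<subseteq> fst ` P"
    using row_deg_pos_iff[OF finite_tab_pos] by force
  then have fin_R: "finite ?R" using finite_subset finite_tab_pos by blast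
  have k: "0 < row_deg P s k" "\<And>i. 0 < row_deg P s i \<Longrightarrow> i \<le> k"
    using Max_in[OF fin_R] Max_ge[OF fin_R] assms unfolding k_def by auto
  let ?C = "{j. mu k < j \<and> 0 < col_deg P s j}"
  define c where "c = Min ?C"
  obtain l where l: "(k,l) \<in> P" "0 < lookup s (k,l)"
    using k(1) row_deg_pos_iff[OF finite_tab_pos] by blast
  have "0 < col_deg P s l" using l lookup_le_col_deg[OF finite_tab_pos] by (metis order.strict_trans2)
  then have "l \<in> ?C" using l(1) by (simp add: mem_tab_pos)
  have "?C \<subseteq> snd ` P"
    using col_deg_pos_iff[OF finite_tab_pos] by force
  then have fin_C: "finite ?C" using finite_subset finite_tab_pos by blast
  have "c \<in> ?C" unfolding c_def using Min_in[OF fin_C] \<open>l \<in> ?C\<close> by blast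
  then show thesis
    using that[OF k] Min_le[OF fin_C] unfolding c_def by auto
qed

lemma diagonal_free_eq_if_row_col_deg_eq:
  assumes "keys s \<subseteq> P" "keys t \<subseteq> P" "diagonal_free s" "diagonal_free t"
    and "row_deg P s = row_deg P t" "col_deg P s = col_deg P t"
  shows "s = t"
  using assms
proof (induction "total_deg P s" arbitrary: s t rule: less_induct)
  case less
  show ?case
  proof (cases "\<forall>i. row_deg P s i = 0")
    case True
    then show ?thesis
      using eq_0_if_row_deg_eq_0[OF finite_tab_pos] less.prems(1,2,5) by metis
  next
    case False
    then obtain k c where k: "0 < row_deg P s k" "\<And>i. 0 < row_deg P s i \<Longrightarrow> i \<le> k"
      and c: "0 < col_deg P s c" "mu k < c" "\<And>j. mu k < j \<Longrightarrow> 0 < col_deg P s j \<Longrightarrow> c \<le> j"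
      using ex_lowest_row_leftmost_col by blast
    have s_kc: "0 < lookup s (k,c)"
      by (rule diagonal_free_corner[OF less.prems(3) k c])
    have t_kc: "0 < lookup t (k,c)"
      by (rule diagonal_free_corner[OF less.prems(4)]) (use k c less.prems(5,6) in auto)
    have kc: "(k,c) \<in> P" using s_kc less.prems(1) by (auto simp: in_keys_iff)
    define s' where "s' = s - var_mon (k,c)"
    define t' where "t' = t - var_mon (k,c)"
    have s: "s = s' + var_mon (k,c)"
      unfolding s'_def by (rule mon_dvd_imp_eq_diff_add[OF mon_dvd_var_mon[OF s_kc]])
    have t: "t = t' + var_mon (k,c)"
      unfolding t'_def by (rule mon_dvd_imp_eq_diff_add[OF mon_dvd_var_mon[OF t_kc]])
    have "s' = t'"
    proof (rule less.hyps)
      show "total_deg P s' < total_deg P s"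
        using total_deg_add[of P s' "var_mon (k,c)"] total_deg_var_mon[OF finite_tab_pos kc] s by simp
      show "keys s' \<subseteq> P" "keys t' \<subseteq> P"
        unfolding s'_def t'_def using keys_mon_diff less.prems(1,2) by blast+
      show "diagonal_free s'" "diagonal_free t'"
        unfolding s'_def t'_def using less.prems(3,4)
        by (auto intro: diagonal_free_mono simp: lookup_minus)
      show "row_deg P s' = row_deg P t'"
        using less.prems(5) s t by (metis row_deg_add add_right_cancel fun_eq_iff)
      show "col_deg P s' = col_deg P t'"
        using less.prems(6) s t by (metis col_deg_add add_right_cancel fun_eq_iff)
    qed
    then show ?thesis using s t by simp
  qed
qed

theorem groebner_basis_tab_minors:
  "is_groebner_basis (minors2 P tab_entry :: 'a::field mpoly set) (ideal_in (poly_ring P) (minors2 P tab_entry))"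
proof -
  interpret graded_binomials P "minors2 P tab_entry :: 'a mpoly set" "\<lambda>m. (row_deg P m, col_deg P m)"
  proof
    fix g :: "'a mpoly" assume "g \<in> minors2 P tab_entry"
    then obtain i j k l where ijkl: "i < k" "j < l" "(i,j) \<in> P" "(i,l) \<in> P" "(k,j) \<in> P" "(k,l) \<in> P"
      and g: "g = mon_binomial (var_mon (i,j) + var_mon (k,l)) (var_mon (i,l) + var_mon (k,j))"
      unfolding minors2_def tab_minor_eq by blast
    show "\<exists>a b. lex_less b a \<and> (row_deg P a, col_deg P a) = (row_deg P b, col_deg P b)
             \<and> keys a \<subseteq> P \<and> keys b \<subseteq> P \<and> (g = mon_binomial a b \<or> g = mon_binomial b a)"
    proof (intro exI conjI)
      show "keys (var_mon (i,j) + var_mon (k,l)) \<subseteq> P" "keys (var_mon (i,l) + var_mon (k,j)) \<subseteq> P"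
        unfolding keys_var_mon_add using ijkl(3-6) by auto
    qed (use lex_less_antidiagonal[OF ijkl(1,2)] row_deg_antidiagonal[OF finite_tab_pos ijkl(3-6)]
           col_deg_antidiagonal[OF finite_tab_pos ijkl(3-6)] g in simp_all)
  qed (auto simp: finite_tab_pos row_deg_add col_deg_add)
  show ?thesis
    by (rule groebner_basis_if_standard_inj)
       (auto intro: diagonal_free_eq_if_row_col_deg_eq diagonal_free_if_standard)
qed

end

section \<open>The symmetrized tableau\<close>

text \<open>If every index carrying row mass precedes every index carrying column mass, the row
  part of \<open>R + C\<close> is recovered greedily: \<open>R x\<close> is \<open>R x + C x\<close> capped by the row mass not yet
  used by the indices below \<open>x\<close>.\<close>
lemma separated_row_eq_min:
  fixes R C :: "nat \<Rightarrow> nat"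
  assumes zero: "\<And>y. N \<le> y \<Longrightarrow> R y = 0"
    and sep: "\<And>y z. 0 < R y \<Longrightarrow> 0 < C z \<Longrightarrow> y \<le> z"
  shows "R x = min (R x + C x) ((\<Sum>y<N. R y) - (\<Sum>y<x. R y + C y))"
proof (cases "\<exists>y. 0 < R y")
  case True
  let ?T = "{y. 0 < R y}"
  have "?T \<subseteq> {..<N}"
  proof
    fix y assume "y \<in> ?T"
    then show "y \<in> {..<N}" using zero[of y] by (cases "N \<le> y") auto
  qed
  then have fin: "finite ?T" using finite_subset by blast
  define t where "t = Max ?T"
  have Rt: "0 < R t" using Max_in[OF fin] True unfolding t_def by auto
  have tN: "t < N" using Rt zero[of t] by (cases "N \<le> t") auto
  have R0: "R y = 0" if "t < y" for y
    by (rule ccontr) (use Max_ge[OF fin, of y] that in \<open>auto simp: t_def\<close>)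
  have C0: "C y = 0" if "y < t" for y using sep[OF Rt, of y] that by (cases "C y = 0") auto
  have total: "(\<Sum>y<N. R y) = (\<Sum>y<Suc t. R y)"
    by (rule sum.mono_neutral_right) (use tN R0 in auto)
  have below: "(\<Sum>y<x. R y + C y) = (\<Sum>y<x. R y)" if "x \<le> t" for x
    by (rule sum.cong) (use that C0 in auto)
  consider "x < t" | "x = t" | "t < x" by fastforce
  then show ?thesis
  proof cases
    case 1
    have "(\<Sum>y<Suc x. R y) \<le> (\<Sum>y<Suc t. R y)" by (rule sum_mono2) (use 1 in auto)
    then have "R x \<le> (\<Sum>y<N. R y) - (\<Sum>y<x. R y + C y)" using below[of x] 1 total by simp
    then show ?thesis using C0[OF 1] by simp
  next
    case 2
    then show ?thesis using below[of x] total by simp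
  next
    case 3
    have "(\<Sum>y<Suc t. R y) \<le> (\<Sum>y<x. R y)" by (rule sum_mono2) (use 3 in auto)
    also have "\<dots> \<le> (\<Sum>y<x. R y + C y)" by (rule sum_mono) simp
    finally show ?thesis using total R0[OF 3] by simp
  qed
qed simp

lemma separated_row_unique:
  fixes R C R' C' :: "nat \<Rightarrow> nat"
  assumes "\<And>y. N \<le> y \<Longrightarrow> R y = 0" "\<And>y z. 0 < R y \<Longrightarrow> 0 < C z \<Longrightarrow> y \<le> z"
    and "\<And>y. N \<le> y \<Longrightarrow> R' y = 0" "\<And>y z. 0 < R' y \<Longrightarrow> 0 < C' z \<Longrightarrow> y \<le> z"
    and "\<And>y. R y + C y = R' y + C' y" "(\<Sum>y<N. R y) = (\<Sum>y<N. R' y)"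
  shows "R = R'"
proof
  fix x
  show "R x = R' x"
    using separated_row_eq_min[of N R C x] separated_row_eq_min[of N R' C' x] assms by simp
qed

definition index_deg :: "(nat \<times> nat) set \<Rightarrow> mon \<Rightarrow> nat \<Rightarrow> nat" where
  "index_deg P m z = row_deg P m z + col_deg P m z"

lemma index_deg_add: "index_deg P (u + a) z = index_deg P u z + index_deg P a z"
  by (simp add: index_deg_def row_deg_add col_deg_add)

lemma index_deg_var_mon:
  "finite P \<Longrightarrow> v \<in> P \<Longrightarrow>
     index_deg P (var_mon v) z = (if fst v = z then 1 else 0) + (if snd v = z then 1 else 0)"
  by (simp only: index_deg_def row_deg_var_mon col_deg_var_mon)

lemma lex_less_sym_minor:
  assumes "a \<le> b" "b < a'" "a' \<le> b'"
  shows "lex_less (var_mon (a,a') + var_mon (b,b')) (var_mon (a,b) + var_mon (a',b'))"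
  unfolding lex_less_def
proof (intro exI[of _ "(a,b)"] conjI allI impI)
  have "(a,a') \<noteq> (a,b)" "(b,b') \<noteq> (a,b)" using assms by auto
  then show "lookup (var_mon (a,a') + var_mon (b,b')) (a,b) < lookup (var_mon (a,b) + var_mon (a',b')) (a,b)"
    by (simp add: lookup_add lookup_single when_def)
next
  fix w assume "var_gt w (a,b)"
  then have "w \<noteq> (a,b)" "w \<noteq> (a',b')" "w \<noteq> (a,a')" "w \<noteq> (b,b')"
    using assms by (auto simp: var_gt_def)
  then show "lookup (var_mon (a,a') + var_mon (b,b')) w = lookup (var_mon (a,b) + var_mon (a',b')) w"
    by (simp add: lookup_add lookup_single when_def)
qed

locale symmetric_ladder_tableau = ladder_tableau +
  assumes n_pos: "1 \<le> n"
    and mu_mono: "\<And>i j. 1 \<le> i \<Longrightarrow> i \<le> j \<Longrightarrow> j \<le> n \<Longrightarrow> mu i \<le> mu j"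
    and mu_lt_lam: "mu n < lam n"
    and mu_ge: "\<And>i. 1 \<le> i \<Longrightarrow> i \<le> n \<Longrightarrow> i - 1 \<le> mu i"
begin

abbreviation SP :: "(nat \<times> nat) set" where "SP \<equiv> sym_pos n lam mu"

definition sym_var :: "nat \<times> nat \<Rightarrow> nat \<times> nat" where
  "sym_var p = (if p \<in> P then p else (snd p, fst p))"

lemma sym_entry_eq_Var: "sym_entry n lam mu p = Var (sym_var p)"
  by (simp add: sym_entry_def sym_var_def)

lemma mem_sym_pos: "(i,j) \<in> SP \<longleftrightarrow> (i,j) \<in> P \<or> (j,i) \<in> P"
  by (simp add: sym_pos_def)

lemma tab_pos_fst_le_snd: "(i,j) \<in> P \<Longrightarrow> i \<le> j"
  using mu_ge[of i] by (auto simp: mem_tab_pos)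

lemma sym_var_in_tab_pos: "p \<in> SP \<Longrightarrow> sym_var p \<in> P"
  by (cases p) (auto simp: sym_var_def mem_sym_pos)

lemma sym_var_id: "p \<in> P \<Longrightarrow> sym_var p = p"
  by (simp add: sym_var_def)

lemma sym_var_swap: "(i,j) \<in> P \<Longrightarrow> sym_var (j,i) = (i,j)"
  using tab_pos_fst_le_snd[of i j] tab_pos_fst_le_snd[of j i] by (auto simp: sym_var_def)

lemma sym_var_cases: "sym_var (i,j) = (i,j) \<or> sym_var (i,j) = (j,i)"
  by (simp add: sym_var_def)

lemma n_le_lam: "1 \<le> i \<Longrightarrow> i \<le> n \<Longrightarrow> n \<le> lam i"
  using lam_antimono[of i n] mu_lt_lam mu_ge[of n] n_pos by linarith

lemma tab_pos_bounded: "(i,j) \<in> P \<Longrightarrow> i < Suc (lam 1) \<and> j < Suc (lam 1)"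
  using n_le_lam[of 1] lam_antimono[of 1 i] n_pos by (auto simp: mem_tab_pos)

lemma tab_minors_subset_sym_minors:
  "minors2 P tab_entry \<subseteq> (minors2 SP (sym_entry n lam mu) :: 'a::comm_ring_1 mpoly set)"
proof
  fix g :: "'a mpoly" assume "g \<in> minors2 P tab_entry"
  then obtain i j k l where ijkl: "i < k" "j < l" "(i,j) \<in> P" "(i,l) \<in> P" "(k,j) \<in> P" "(k,l) \<in> P"
      and g: "g = tab_entry (i,j) * tab_entry (k,l) - tab_entry (i,l) * tab_entry (k,j)"
    unfolding minors2_def by blast
  have "g = sym_entry n lam mu (i,j) * sym_entry n lam mu (k,l)
                 - sym_entry n lam mu (i,l) * sym_entry n lam mu (k,j)"
    using g ijkl by (simp add: sym_entry_def tab_entry_def)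
  moreover have "(i,j) \<in> SP" "(i,l) \<in> SP" "(k,j) \<in> SP" "(k,l) \<in> SP"
    using ijkl by (simp_all add: mem_sym_pos)
  ultimately show "g \<in> minors2 SP (sym_entry n lam mu)"
    unfolding minors2_def using ijkl(1,2) by blast
qed

lemma diagonal_free_if_standard_sym:
  "standard (minors2 SP (sym_entry n lam mu) :: 'a::comm_ring_1 mpoly set) s \<Longrightarrow> diagonal_free s"
  by (rule diagonal_free_if_standard[OF tab_minors_subset_sym_minors])

text \<open>Otherwise the symmetric 2-minor on rows \<open>a < b'\<close> and columns \<open>b < a'\<close> has leading
  monomial \<open>T(a,b) T(a',b')\<close>.\<close>
lemma standard_sym_row_le_col:
  assumes std: "standard (minors2 SP (sym_entry n lam mu) :: 'a::comm_ring_1 mpoly set) s"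
    and ab: "(a,b) \<in> P" "(a',b') \<in> P" "0 < lookup s (a,b)" "0 < lookup s (a',b')"
  shows "a' \<le> b"
proof (rule ccontr)
  assume "\<not> a' \<le> b"
  then have "b < a'" by simp
  have "a \<le> b" "a' \<le> b'" using ab(1,2) by (simp_all add: tab_pos_fst_le_snd)
  have aa': "(a,a') \<in> P"
    using ab(1,2) \<open>b < a'\<close> n_le_lam[of a] by (auto simp: mem_tab_pos)
  have bb': "(b,b') \<in> P"
    using ab(1,2) \<open>a \<le> b\<close> \<open>b < a'\<close> mu_mono[of b a'] lam_antimono[of b a'] by (auto simp: mem_tab_pos)
  let ?lead = "var_mon (a,b) + var_mon (a',b')"
  let ?g = "mon_binomial ?lead (var_mon (a,a') + var_mon (b,b')) :: 'a mpoly"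
  have "?g = sym_entry n lam mu (a,b) * sym_entry n lam mu (b',a')
           - sym_entry n lam mu (a,a') * sym_entry n lam mu (b',b)"
    by (simp only: sym_entry_eq_Var sym_var_id[OF ab(1)] sym_var_id[OF aa'] sym_var_swap[OF ab(2)]
        sym_var_swap[OF bb'] Var_mult_Var mon_binomial_def)
  moreover have "(a,b) \<in> SP" "(a,a') \<in> SP" "(b',b) \<in> SP" "(b',a') \<in> SP"
    using ab aa' bb' by (simp_all add: mem_sym_pos)
  moreover have "a < b'" "b < a'" using \<open>a \<le> b\<close> \<open>b < a'\<close> \<open>a' \<le> b'\<close> by simp_all
  ultimately have g: "?g \<in> minors2 SP (sym_entry n lam mu)"
    unfolding minors2_def by blast
  have less: "lex_less (var_mon (a,a') + var_mon (b,b')) ?lead"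
    using \<open>a \<le> b\<close> \<open>b < a'\<close> \<open>a' \<le> b'\<close> by (rule lex_less_sym_minor)
  have "\<not> mon_dvd (lead_mon ?g) s"
    using std g mon_binomial_nonzero[OF less] unfolding standard_def by blast
  then have "\<not> mon_dvd ?lead s"
    unfolding lead_mon_mon_binomial[OF less] .
  moreover have "(a,b) \<noteq> (a',b')" using \<open>a \<le> b\<close> \<open>b < a'\<close> by auto
  ultimately show False using mon_dvd_var_mon_add ab(3,4) by blast
qed

lemma index_deg_sym_var:
  assumes "p \<in> SP"
  shows "index_deg P (var_mon (sym_var p)) z = (if fst p = z then 1 else 0) + (if snd p = z then 1 else 0)"
proof -
  obtain i j where p: "p = (i,j)" by fastforce
  have deg: "index_deg P (var_mon (sym_var p)) z
          = (if fst (sym_var p) = z then 1 else 0) + (if snd (sym_var p) = z then 1 else 0)"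
    by (rule index_deg_var_mon[OF finite_tab_pos sym_var_in_tab_pos[OF assms]])
  from sym_var_cases[of i j] show ?thesis
  proof
    assume "sym_var (i,j) = (j,i)"
    then show ?thesis using deg p by (simp add: add.commute)
  qed (use deg p in simp)
qed

lemma standard_sym_eq_if_index_deg_eq:
  fixes s t :: mon
  defines "G \<equiv> minors2 SP (sym_entry n lam mu) :: 'a::comm_ring_1 mpoly set"
  assumes keys: "keys s \<subseteq> P" "keys t \<subseteq> P" and std: "standard G s" "standard G t"
    and deg: "index_deg P s = index_deg P t"
  shows "s = t"
proof -
  define N where "N = Suc (lam 1)"
  have bounded: "\<And>i j. (i,j) \<in> P \<Longrightarrow> i < N \<and> j < N"
    unfolding N_def by (rule tab_pos_bounded)
  have rows_before_cols: "y \<le> z" if "standard G u" "0 < row_deg P u y" "0 < col_deg P u z" for u y z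
    using that standard_sym_row_le_col[of u] unfolding G_def
    by (auto simp: row_deg_pos_iff[OF finite_tab_pos] col_deg_pos_iff[OF finite_tab_pos])
  have rows_bounded: "row_deg P u y = 0" if "N \<le> y" for u y
    using that bounded row_deg_pos_iff[OF finite_tab_pos, of u y] by fastforce
  have "(\<Sum>y<N. index_deg P s y) = (\<Sum>y<N. index_deg P t y)" using deg by simp
  then have "total_deg P s = total_deg P t"
    by (simp add: index_deg_def sum.distrib sum_row_deg[OF finite_tab_pos bounded]
        sum_col_deg[OF finite_tab_pos bounded])
  then have "row_deg P s = row_deg P t"
    using separated_row_unique[of N "row_deg P s" "col_deg P s" "row_deg P t" "col_deg P t"]
      rows_bounded rows_before_cols[OF std(1)] rows_before_cols[OF std(2)] deg
    by (simp add: sum_row_deg[OF finite_tab_pos bounded] index_deg_def fun_eq_iff)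
  moreover from this have "col_deg P s = col_deg P t"
    using deg by (simp add: index_deg_def fun_eq_iff)
  ultimately show "s = t"
    using diagonal_free_eq_if_row_col_deg_eq keys diagonal_free_if_standard_sym std
    unfolding G_def by blast
qed

theorem groebner_basis_sym_minors:
  "is_groebner_basis (minors2 SP (sym_entry n lam mu) :: 'a::field mpoly set)
     (ideal_in (poly_ring P) (minors2 SP (sym_entry n lam mu)))"
proof -
  interpret graded_binomials P "minors2 SP (sym_entry n lam mu) :: 'a mpoly set" "index_deg P"
  proof
    fix g :: "'a mpoly" assume "g \<in> minors2 SP (sym_entry n lam mu)"
    then obtain i j k l where ijkl: "i < k" "j < l" "(i,j) \<in> SP" "(i,l) \<in> SP" "(k,j) \<in> SP" "(k,l) \<in> SP"
      and g: "g = mon_binomial (var_mon (sym_var (i,j)) + var_mon (sym_var (k,l)))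
                               (var_mon (sym_var (i,l)) + var_mon (sym_var (k,j)))"
      unfolding minors2_def sym_entry_eq_Var Var_mult_Var mon_binomial_def by blast
    define a where "a = var_mon (sym_var (i,j)) + var_mon (sym_var (k,l))"
    define b where "b = var_mon (sym_var (i,l)) + var_mon (sym_var (k,j))"
    have "sym_var (i,j) \<noteq> sym_var (i,l)" "sym_var (i,j) \<noteq> sym_var (k,j)"
      using ijkl(1,2) sym_var_cases[of i j] sym_var_cases[of i l] sym_var_cases[of k j] by auto
    then have "lookup b (sym_var (i,j)) \<noteq> lookup a (sym_var (i,j))"
      by (simp add: a_def b_def lookup_add lookup_single when_def)
    then have "lex_less b a \<or> lex_less a b" using lex_less_linear by metis
    moreover have "index_deg P a = index_deg P b"
      using ijkl(3-6) by (simp only: a_def b_def fun_eq_iff index_deg_add index_deg_sym_var) auto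
    moreover have "keys a \<subseteq> P" "keys b \<subseteq> P"
      unfolding a_def b_def keys_var_mon_add using sym_var_in_tab_pos ijkl(3-6) by auto
    ultimately show "\<exists>a b. lex_less b a \<and> index_deg P a = index_deg P b \<and> keys a \<subseteq> P \<and> keys b \<subseteq> P
                       \<and> (g = mon_binomial a b \<or> g = mon_binomial b a)"
      using g unfolding a_def b_def by metis
  qed (auto simp: finite_tab_pos index_deg_add fun_eq_iff)
  show ?thesis
    by (rule groebner_basis_if_standard_inj) (auto intro: standard_sym_eq_if_index_deg_eq)
qed

end

theorem theorem2p4:
  fixes n :: nat and lam mu :: "nat \<Rightarrow> nat"
  assumes "n \<ge> 1"
    and "\<forall>i. 1 \<le> i \<and> i \<le> n \<longrightarrow> lam i > 0"
    and "\<forall>i j. 1 \<le> i \<and> i \<le> j \<and> j \<le> n \<longrightarrow> lam j \<le> lam i"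
    and "\<forall>i j. 1 \<le> i \<and> i \<le> j \<and> j \<le> n \<longrightarrow> mu i \<le> mu j"
    and "mu n < lam n"
    and "\<forall>i. 1 \<le> i \<and> i \<le> n \<longrightarrow> i - 1 \<le> mu i"
  shows "is_groebner_basis (minors2 (tab_pos n lam mu) tab_entry :: 'a::field mpoly set)
            (ideal_in (poly_ring (tab_pos n lam mu)) (minors2 (tab_pos n lam mu) tab_entry))
       \<and> is_groebner_basis (minors2 (sym_pos n lam mu) (sym_entry n lam mu) :: 'a::field mpoly set)
            (ideal_in (poly_ring (tab_pos n lam mu)) (minors2 (sym_pos n lam mu) (sym_entry n lam mu)))"
proof -
  interpret symmetric_ladder_tableau n lam mu
    using assms(1,3-6) by unfold_locales auto
  show ?thesis
    using groebner_basis_tab_minors groebner_basis_sym_minors by blast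
qed

end
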